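(* Let $G$ be a random $(d_1,d_2)$-biregular bipartite graph with $d_2\leq d_1\leq n^{1/3}$. There is an absolute constant $c_1>0$ such that (for $n$ large enough): (1) If $H$ is a subgraph of $K_{n,m}$ in which every vertex has degree at least $2$, with $e$ edges where $e=o(n^{1/3})$, then $\mathbb P(H\subseteq G)\leq c_1\left(\frac{(d_1-1)(d_2-1)}{nm}\right)^{e/2}$. (2) If $\alpha$ is a cycle of length $2k$ in $K_{n,m}$ with $k\leq n^{1/10}$, then $\mathbb P(\alpha\subseteq G)\leq c_1\left(\frac{(d_1-1)(d_2-1)}{nm}\right)^{k}$. (3) If moreover $\beta$ is another cycle of length $2j\leq 2n^{1/10}$ in $K_{n,m}$ and $\alpha,\beta$ share $f$ edges, then $\mathbb P(\alpha\cup\beta\subseteq G)\leq c_1\left(\frac{(d_1-1)(d_2-1)}{nm}\right)^{j+k-f/2}$.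
   Context: A $(d_1,d_2)$-biregular bipartite graph on $V_1=[n]$, $V_2=[m]$ is a simple bipartite graph with all vertices in $V_1$ of degree $d_1$ and all in $V_2$ of degree $d_2$ ($nd_1=md_2$); a random one is chosen uniformly among all such. $K_{n,m}$ is the complete bipartite graph on $V_1\cup V_2$. Cycles are simple cycles. *)

theory Defs
  imports "HOL-Probability.Probability" "HOL-Library.Landau_Symbols"
begin

text \<open>Bipartite graphs on V1 = {1..n}, V2 = {1..m} are represented by their edge sets,
  a set of pairs (i,j) with i in V1 and j in V2; K_{n,m} has edge set {1..n} \<times> {1..m}.\<close>

definition biregular :: "nat \<Rightarrow> nat \<Rightarrow> nat \<Rightarrow> nat \<Rightarrow> (nat \<times> nat) set \<Rightarrow> bool" where
  "biregular n m d1 d2 G \<longleftrightarrow>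
     G \<subseteq> {1..n} \<times> {1..m} \<and>
     (\<forall>i\<in>{1..n}. card {j. (i, j) \<in> G} = d1) \<and>
     (\<forall>j\<in>{1..m}. card {i. (i, j) \<in> G} = d2)"

definition biregular_graphs :: "nat \<Rightarrow> nat \<Rightarrow> nat \<Rightarrow> nat \<Rightarrow> (nat \<times> nat) set set" where
  "biregular_graphs n m d1 d2 = {G. biregular n m d1 d2 G}"

definition random_biregular :: "nat \<Rightarrow> nat \<Rightarrow> nat \<Rightarrow> nat \<Rightarrow> (nat \<times> nat) set pmf" where
  "random_biregular n m d1 d2 = pmf_of_set (biregular_graphs n m d1 d2)"

definition min_deg2_subgraph :: "nat \<Rightarrow> nat \<Rightarrow> (nat \<times> nat) set \<Rightarrow> bool" where
  "min_deg2_subgraph n m H \<longleftrightarrow>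
     H \<subseteq> {1..n} \<times> {1..m} \<and>
     (\<forall>(i, j)\<in>H. 2 \<le> card {j'. (i, j') \<in> H} \<and> 2 \<le> card {i'. (i', j) \<in> H})"

text \<open>Edge set of a (simple) cycle of length 2k in K_{n,m}:
  a_0 b_0 a_1 b_1 ... a_{k-1} b_{k-1} a_0 with distinct a's in V1 and distinct b's in V2.\<close>
definition bip_cycle :: "nat \<Rightarrow> nat \<Rightarrow> nat \<Rightarrow> (nat \<times> nat) set \<Rightarrow> bool" where
  "bip_cycle n m k C \<longleftrightarrow> 2 \<le> k \<and>
     (\<exists>a b. inj_on a {..<k} \<and> inj_on b {..<k} \<and>
        a ` {..<k} \<subseteq> {1..n} \<and> b ` {..<k} \<subseteq> {1..m} \<and>
        C = (\<lambda>i. (a i, b i)) ` {..<k} \<union> (\<lambda>i. (a (Suc i mod k), b i)) ` {..<k})"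

end

theory Submission
  imports Defs "HOL-Real_Asymp.Real_Asymp"
begin

text \<open>
  Switching. Let xy be an edge outside an edge set F. From a biregular G containing F and xy
  and an edge ab of G - F with ay and xb not in G, the switch G - {xy, ab} + {xb, ay} is again
  biregular and contains F. Each such G admits at least n d1 - |F| - 2 d1 d2 choices of ab;
  conversely G' and ab determine G, and a, b are new neighbours of y, x in G' compared to F.
  Hence
    #{G containing F + xy} (n d1 - |F| - 2 d1 d2) <= #{G containing F} (d2 - deg_F y) (d1 - deg_F x).
  Adding the e edges of H one by one, the last factors telescope into falling factorials, so
    P(H in G) <= prod_i (d1)_(deg_H i) prod_j (d2)_(deg_H j) / (n d1 - e - 2 d1 d2)^e.
  If H has minimum degree 2 then (d)_t <= (d (d - 1))^(t/2), and n d1 = m d2 turns the numerator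
  into (n d1 sqrt ((d1 - 1) (d2 - 1) / (n m)))^e. For e <= n^(1/3) / 24 and d2 <= d1 <= n^(1/3),
  Bernoulli's inequality bounds (n d1 / (n d1 - e - 2 d1 d2))^e by 2, so c1 = 2 works. Cycles,
  and unions of two cycles, have minimum degree 2, and a union with f common edges has
  2 (j + k) - f edges.
\<close>

abbreviation right_nbrs :: "('a \<times> 'b) set \<Rightarrow> 'a \<Rightarrow> 'b set" where
  "right_nbrs G i \<equiv> {j. (i, j) \<in> G}"

abbreviation left_nbrs :: "('a \<times> 'b) set \<Rightarrow> 'b \<Rightarrow> 'a set" where
  "left_nbrs G j \<equiv> {i. (i, j) \<in> G}"

lemma finite_right_nbrs: "finite G \<Longrightarrow> finite (right_nbrs G i)"
  by (rule finite_subset[of _ "snd ` G"]) force+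

lemma finite_left_nbrs: "finite G \<Longrightarrow> finite (left_nbrs G j)"
  by (rule finite_subset[of _ "fst ` G"]) force+

lemma card_eq_sum_card_right_nbrs:
  assumes "H \<subseteq> A \<times> B" "finite A" "finite B"
  shows "card H = (\<Sum>i\<in>A. card (right_nbrs H i))"
proof -
  have "right_nbrs H i \<subseteq> B" for i using assms(1) by auto
  then have "finite (right_nbrs H i)" for i using assms(3) by (rule finite_subset)
  then have "card (Sigma A (right_nbrs H)) = (\<Sum>i\<in>A. card (right_nbrs H i))" using assms(2) by simp
  moreover have "Sigma A (right_nbrs H) = H" using assms(1) by auto
  ultimately show ?thesis by simp
qed

lemma card_eq_sum_card_left_nbrs:
  assumes "H \<subseteq> A \<times> B" "finite A" "finite B"
  shows "card H = (\<Sum>j\<in>B. card (left_nbrs H j))"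
proof -
  have "left_nbrs H j \<subseteq> A" for j using assms(1) by auto
  then have "finite (left_nbrs H j)" for j using assms(2) by (rule finite_subset)
  then have "card (Sigma B (left_nbrs H)) = (\<Sum>j\<in>B. card (left_nbrs H j))" using assms(3) by simp
  moreover have "card (prod.swap ` Sigma B (left_nbrs H)) = card (Sigma B (left_nbrs H))"
    by (rule card_image) (simp add: inj_on_def)
  moreover have "prod.swap ` Sigma B (left_nbrs H) = H" using assms(1) by force
  ultimately show ?thesis by simp
qed

lemma finite_if_subset_grid: "G \<subseteq> {1..n} \<times> {1..m} \<Longrightarrow> finite (G :: (nat \<times> nat) set)"
  using finite_subset by blast

lemma finite_biregular: "biregular n m d1 d2 G \<Longrightarrow> finite G"
  unfolding biregular_def using finite_if_subset_grid by blast

lemma finite_biregular_graphs: "finite (biregular_graphs n m d1 d2)"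
  by (rule finite_subset[of _ "Pow ({1..n} \<times> {1..m})"])
    (auto simp: biregular_graphs_def biregular_def)

lemma card_edges_from_left:
  assumes G: "biregular n m d1 d2 G" and A: "A \<subseteq> {1..n}"
  shows "card {p \<in> G. fst p \<in> A} = card A * d1"
proof -
  have "{p \<in> G. fst p \<in> A} \<subseteq> A \<times> {1..m}" using G by (auto simp: biregular_def)
  moreover have "finite A" using A finite_subset by blast
  ultimately have "card {p \<in> G. fst p \<in> A} = (\<Sum>i\<in>A. card (right_nbrs {p \<in> G. fst p \<in> A} i))"
    by (intro card_eq_sum_card_right_nbrs[where B = "{1..m}"]) auto
  also have "\<dots> = (\<Sum>i\<in>A. d1)" using G A by (intro sum.cong) (auto simp: biregular_def)
  finally show ?thesis by simp
qed

lemma card_edges_into_right: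
  assumes G: "biregular n m d1 d2 G" and B: "B \<subseteq> {1..m}"
  shows "card {p \<in> G. snd p \<in> B} = card B * d2"
proof -
  have "{p \<in> G. snd p \<in> B} \<subseteq> {1..n} \<times> B" using G by (auto simp: biregular_def)
  moreover have "finite B" using B finite_subset by blast
  ultimately have "card {p \<in> G. snd p \<in> B} = (\<Sum>j\<in>B. card (left_nbrs {p \<in> G. snd p \<in> B} j))"
    by (intro card_eq_sum_card_left_nbrs[where A = "{1..n}"]) auto
  also have "\<dots> = (\<Sum>j\<in>B. d2)" using G B by (intro sum.cong) (auto simp: biregular_def)
  finally show ?thesis by simp
qed

lemma card_biregular:
  assumes "biregular n m d1 d2 G" shows "card G = n * d1"
proof -
  have "{p \<in> G. fst p \<in> {1..n}} = G" using assms by (auto simp: biregular_def)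
  then show ?thesis using card_edges_from_left[OF assms, of "{1..n}"] by simp
qed

lemma biregular_zero_degree_empty:
  assumes "biregular n m 0 d2 G" shows "G = {}"
proof -
  have "right_nbrs G i = {}" if "(i, j) \<in> G" for i j
    using assms that finite_right_nbrs[OF finite_biregular[OF assms]] by (auto simp: biregular_def)
  then show ?thesis by auto
qed

definition switch :: "'a \<Rightarrow> 'b \<Rightarrow> 'a \<Rightarrow> 'b \<Rightarrow> ('a \<times> 'b) set \<Rightarrow> ('a \<times> 'b) set" where
  "switch x y a b G = G - {(x, y), (a, b)} \<union> {(x, b), (a, y)}"

lemma switch_switch:
  assumes "(x, y) \<in> G" "(a, b) \<in> G" "(x, b) \<notin> G" "(a, y) \<notin> G"
  shows "switch x b a y (switch x y a b G) = G"
  using assms unfolding switch_def by auto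

lemma biregular_switch:
  assumes G: "biregular n m d1 d2 G"
    and xy: "(x, y) \<in> G" and ab: "(a, b) \<in> G" and "(x, b) \<notin> G" "(a, y) \<notin> G"
  shows "biregular n m d1 d2 (switch x y a b G)"
proof -
  have "a \<noteq> x" "b \<noteq> y" using assms by auto
  have fin: "finite G" using finite_biregular[OF G] .
  have "0 < card (right_nbrs G x)" "0 < card (right_nbrs G a)"
    "0 < card (left_nbrs G y)" "0 < card (left_nbrs G b)"
    using xy ab finite_right_nbrs[OF fin] finite_left_nbrs[OF fin] card_gt_0_iff by blast+
  have "card (right_nbrs (switch x y a b G) i) = card (right_nbrs G i)" for i
  proof -
    have "right_nbrs (switch x y a b G) i =
        (if i = x then insert b (right_nbrs G x - {y})
         else if i = a then insert y (right_nbrs G a - {b}) else right_nbrs G i)"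
      using \<open>a \<noteq> x\<close> unfolding switch_def by auto
    then show ?thesis
      using assms \<open>a \<noteq> x\<close> \<open>0 < card (right_nbrs G x)\<close> \<open>0 < card (right_nbrs G a)\<close>
        finite_right_nbrs[OF fin] by simp
  qed
  moreover have "card (left_nbrs (switch x y a b G) j) = card (left_nbrs G j)" for j
  proof -
    have "left_nbrs (switch x y a b G) j =
        (if j = y then insert a (left_nbrs G y - {x})
         else if j = b then insert x (left_nbrs G b - {a}) else left_nbrs G j)"
      using \<open>b \<noteq> y\<close> unfolding switch_def by auto
    then show ?thesis
      using assms \<open>b \<noteq> y\<close> \<open>0 < card (left_nbrs G y)\<close> \<open>0 < card (left_nbrs G b)\<close>
        finite_left_nbrs[OF fin] by simp
  qed
  moreover have "switch x y a b G \<subseteq> {1..n} \<times> {1..m}"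
    using G xy ab unfolding switch_def biregular_def by auto
  ultimately show ?thesis using G unfolding biregular_def by simp
qed

text \<open>The conditions ay, xb not in G already force a \<noteq> x and b \<noteq> y when xy, ab are in G.\<close>

definition switchable :: "'a \<Rightarrow> 'b \<Rightarrow> ('a \<times> 'b) set \<Rightarrow> ('a \<times> 'b) set \<Rightarrow> ('a \<times> 'b) set" where
  "switchable x y F G = {(a, b) \<in> G - F. (a, y) \<notin> G \<and> (x, b) \<notin> G}"

lemma card_switchable_ge:
  assumes G: "biregular n m d1 d2 G" and xy: "(x, y) \<in> G" and F: "finite F"
  shows "n * d1 - (card F + 2 * d1 * d2) \<le> card (switchable x y F G)"
proof -
  let ?S = "switchable x y F G"
  let ?at_nbr_y = "{p \<in> G. fst p \<in> left_nbrs G y}" and ?at_nbr_x = "{p \<in> G. snd p \<in> right_nbrs G x}"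
  have sub: "G \<subseteq> {1..n} \<times> {1..m}" using G by (simp add: biregular_def)
  have "x \<in> {1..n}" "y \<in> {1..m}" using sub xy by auto
  then have deg: "card (left_nbrs G y) = d2" "card (right_nbrs G x) = d1"
    using G by (auto simp: biregular_def)
  have nbrs: "left_nbrs G y \<subseteq> {1..n}" "right_nbrs G x \<subseteq> {1..m}" using sub by auto
  have "G \<subseteq> ?S \<union> F \<union> ?at_nbr_y \<union> ?at_nbr_x" unfolding switchable_def by auto
  then have "card G \<le> card (?S \<union> F \<union> ?at_nbr_y \<union> ?at_nbr_x)"
    by (rule card_mono[rotated])
      (use finite_biregular[OF G] F in \<open>auto simp: switchable_def intro: rev_finite_subset\<close>)
  also have "\<dots> \<le> card ?S + card F + card ?at_nbr_y + card ?at_nbr_x"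
    by (rule order_trans[OF card_Un_le] add_mono order_refl)+
  also have "card ?at_nbr_y = d1 * d2"
    using card_edges_from_left[OF G nbrs(1)] deg by simp
  also have "card ?at_nbr_x = d1 * d2"
    using card_edges_into_right[OF G nbrs(2)] deg by simp
  finally show ?thesis using card_biregular[OF G] by (simp add: mult_2 distrib_right)
qed

lemma inj_on_switch:
  assumes "\<And>G. G \<in> A \<Longrightarrow> (x, y) \<in> G"
  shows "inj_on (\<lambda>(G, a, b). (switch x y a b G, a, b)) (Sigma A (switchable x y F))"
proof (rule inj_onI)
  fix u v
  assume u: "u \<in> Sigma A (switchable x y F)" and v: "v \<in> Sigma A (switchable x y F)"
    and eq: "(\<lambda>(G, a, b). (switch x y a b G, a, b)) u = (\<lambda>(G, a, b). (switch x y a b G, a, b)) v"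
  obtain G a b G' where uv: "u = (G, a, b)" "v = (G', a, b)" and sw: "switch x y a b G = switch x y a b G'"
    using eq by (cases u, cases v) auto
  have "G = switch x b a y (switch x y a b G)"
    using u assms by (intro switch_switch[symmetric]) (auto simp: uv switchable_def)
  also have "\<dots> = G'"
    unfolding sw using v assms by (intro switch_switch) (auto simp: uv switchable_def)
  finally show "u = v" by (simp add: uv)
qed

lemma switch_mem_supergraphs:
  assumes G: "biregular n m d1 d2 G" "insert (x, y) F \<subseteq> G" and xy: "(x, y) \<notin> F"
    and ab: "(a, b) \<in> switchable x y F G"
  shows "switch x y a b G \<in> {G' \<in> biregular_graphs n m d1 d2. F \<subseteq> G'}"
    and "(a, b) \<in> (left_nbrs (switch x y a b G) y - left_nbrs F y) \<times>
      (right_nbrs (switch x y a b G) x - right_nbrs F x)"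
proof -
  have "biregular n m d1 d2 (switch x y a b G)"
    using biregular_switch[OF G(1)] G(2) ab by (auto simp: switchable_def)
  moreover have "F \<subseteq> switch x y a b G"
    using G(2) ab xy by (auto simp: switchable_def switch_def)
  ultimately show "switch x y a b G \<in> {G' \<in> biregular_graphs n m d1 d2. F \<subseteq> G'}"
    by (simp add: biregular_graphs_def)
  show "(a, b) \<in> (left_nbrs (switch x y a b G) y - left_nbrs F y) \<times>
      (right_nbrs (switch x y a b G) x - right_nbrs F x)"
    using G(2) ab by (auto simp: switchable_def switch_def)
qed

lemma card_new_neighbours:
  assumes G: "biregular n m d1 d2 G" "F \<subseteq> G" and F: "finite F" and "x \<in> {1..n}" "y \<in> {1..m}"
  shows "card ((left_nbrs G y - left_nbrs F y) \<times> (right_nbrs G x - right_nbrs F x))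
    = (d2 - card (left_nbrs F y)) * (d1 - card (right_nbrs F x))"
proof -
  have "card (left_nbrs G y - left_nbrs F y) = d2 - card (left_nbrs F y)"
    using assms finite_left_nbrs[OF F] by (subst card_Diff_subset) (auto simp: biregular_def)
  moreover have "card (right_nbrs G x - right_nbrs F x) = d1 - card (right_nbrs F x)"
    using assms finite_right_nbrs[OF F] by (subst card_Diff_subset) (auto simp: biregular_def)
  ultimately show ?thesis by (simp add: card_cartesian_product)
qed

lemma switching_count:
  assumes F: "finite F" and x: "x \<in> {1..n}" and y: "y \<in> {1..m}" and xy: "(x, y) \<notin> F"
  shows "card {G \<in> biregular_graphs n m d1 d2. insert (x, y) F \<subseteq> G} * (n * d1 - (card F + 2 * d1 * d2))
    \<le> card {G \<in> biregular_graphs n m d1 d2. F \<subseteq> G}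
      * ((d2 - card (left_nbrs F y)) * (d1 - card (right_nbrs F x)))"
proof -
  define A where "A = {G \<in> biregular_graphs n m d1 d2. insert (x, y) F \<subseteq> G}"
  define B where "B = {G \<in> biregular_graphs n m d1 d2. F \<subseteq> G}"
  define new_nbrs where
    "new_nbrs G = (left_nbrs G y - left_nbrs F y) \<times> (right_nbrs G x - right_nbrs F x)" for G
  define L where "L = n * d1 - (card F + 2 * d1 * d2)"
  define D where "D = (d2 - card (left_nbrs F y)) * (d1 - card (right_nbrs F x))"
  have A: "biregular n m d1 d2 G" "insert (x, y) F \<subseteq> G" if "G \<in> A" for G
    using that by (simp_all add: A_def biregular_graphs_def)
  have B: "biregular n m d1 d2 G" "F \<subseteq> G" if "G \<in> B" for G
    using that by (simp_all add: B_def biregular_graphs_def)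
  have fin_A: "finite A" and fin_B: "finite B"
    using finite_biregular_graphs by (auto simp: A_def B_def)
  have fin_switchable: "finite (switchable x y F G)" if "G \<in> A" for G
    using finite_biregular[OF A(1)[OF that]] by (auto simp: switchable_def intro: rev_finite_subset)
  have fin_new_nbrs: "finite (new_nbrs G)" if "G \<in> B" for G
    using finite_biregular[OF B(1)[OF that]]
    by (auto simp: new_nbrs_def intro: finite_left_nbrs finite_right_nbrs)
  have "L \<le> card (switchable x y F G)" if "G \<in> A" for G
    using card_switchable_ge[OF A(1)[OF that] _ F] A(2)[OF that] by (simp add: L_def)
  then have "card A * L \<le> (\<Sum>G\<in>A. card (switchable x y F G))"
    using sum_bounded_below[of A L] by (simp add: mult.commute)
  also have "\<dots> = card (Sigma A (switchable x y F))"
    using fin_A fin_switchable by simp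
  also have "\<dots> \<le> card (Sigma B new_nbrs)"
  proof (rule card_inj_on_le)
    show "inj_on (\<lambda>(G, a, b). (switch x y a b G, a, b)) (Sigma A (switchable x y F))"
      using A(2) by (intro inj_on_switch) blast
    show "(\<lambda>(G, a, b). (switch x y a b G, a, b)) ` Sigma A (switchable x y F) \<subseteq> Sigma B new_nbrs"
      using switch_mem_supergraphs[OF A xy] by (auto simp: B_def new_nbrs_def)
    show "finite (Sigma B new_nbrs)" using fin_B fin_new_nbrs by (rule finite_SigmaI)
  qed
  also have "\<dots> = (\<Sum>G\<in>B. card (new_nbrs G))"
    using fin_B fin_new_nbrs by simp
  also have "\<dots> = card B * D"
    using card_new_neighbours[OF B F x y] by (simp add: new_nbrs_def D_def)
  finally show ?thesis unfolding A_def B_def L_def D_def .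
qed

text \<open>Truncated subtraction makes falling_fact d t = 0 for t > d, as it should.\<close>

definition falling_fact :: "nat \<Rightarrow> nat \<Rightarrow> nat" where
  "falling_fact d t = (\<Prod>r<t. d - r)"

lemma falling_fact_Suc: "falling_fact d (Suc t) = falling_fact d t * (d - t)"
  by (simp add: falling_fact_def)

definition degree_weight :: "nat \<Rightarrow> nat \<Rightarrow> nat \<Rightarrow> nat \<Rightarrow> (nat \<times> nat) set \<Rightarrow> nat" where
  "degree_weight n m d1 d2 H =
     (\<Prod>i\<in>{1..n}. falling_fact d1 (card (right_nbrs H i))) *
     (\<Prod>j\<in>{1..m}. falling_fact d2 (card (left_nbrs H j)))"

lemma prod_falling_fact_Suc_at:
  assumes "finite I" "x \<in> I" "c' x = Suc (c x)" "\<And>i. i \<noteq> x \<Longrightarrow> c' i = c i"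
  shows "(\<Prod>i\<in>I. falling_fact d (c' i)) = (\<Prod>i\<in>I. falling_fact d (c i)) * (d - c x)"
proof -
  have "(\<Prod>i\<in>I. falling_fact d (c' i)) =
      falling_fact d (c' x) * (\<Prod>i\<in>I - {x}. falling_fact d (c' i))"
    using assms(1,2) by (rule prod.remove)
  also have "\<dots> = falling_fact d (c x) * (d - c x) * (\<Prod>i\<in>I - {x}. falling_fact d (c i))"
    using assms(3,4) by (simp add: falling_fact_Suc)
  also have "\<dots> = (\<Prod>i\<in>I. falling_fact d (c i)) * (d - c x)"
    using assms(1,2) by (simp add: prod.remove)
  finally show ?thesis .
qed

lemma degree_weight_insert:
  assumes H: "finite H" and x: "x \<in> {1..n}" and y: "y \<in> {1..m}" and xy: "(x, y) \<notin> H"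
  shows "degree_weight n m d1 d2 (insert (x, y) H) =
    degree_weight n m d1 d2 H * ((d2 - card (left_nbrs H y)) * (d1 - card (right_nbrs H x)))"
proof -
  have "right_nbrs (insert (x, y) H) i = (if i = x then insert y (right_nbrs H i) else right_nbrs H i)"
    and "left_nbrs (insert (x, y) H) j = (if j = y then insert x (left_nbrs H j) else left_nbrs H j)"
    for i j by auto
  then have "(\<Prod>i\<in>{1..n}. falling_fact d1 (card (right_nbrs (insert (x, y) H) i))) =
      (\<Prod>i\<in>{1..n}. falling_fact d1 (card (right_nbrs H i))) * (d1 - card (right_nbrs H x))"
    and "(\<Prod>j\<in>{1..m}. falling_fact d2 (card (left_nbrs (insert (x, y) H) j))) =
      (\<Prod>j\<in>{1..m}. falling_fact d2 (card (left_nbrs H j))) * (d2 - card (left_nbrs H y))"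
    using x y xy finite_right_nbrs[OF H] finite_left_nbrs[OF H]
    by (auto intro!: prod_falling_fact_Suc_at)
  then show ?thesis unfolding degree_weight_def by simp
qed

lemma card_supergraphs_mult_le:
  fixes H :: "(nat \<times> nat) set"
  assumes "H \<subseteq> {1..n} \<times> {1..m}" "card H \<le> e"
  shows "card {G \<in> biregular_graphs n m d1 d2. H \<subseteq> G} * (n * d1 - (e + 2 * d1 * d2)) ^ card H
    \<le> card (biregular_graphs n m d1 d2) * degree_weight n m d1 d2 H"
proof -
  have "finite H" using assms(1) by (rule finite_if_subset_grid)
  then show ?thesis using assms
  proof (induction H rule: finite_induct)
    case empty
    then show ?case by (simp add: degree_weight_def falling_fact_def)
  next
    case (insert p F)
    obtain x y where p: "p = (x, y)" by (cases p)
    let ?S = "\<lambda>F. card {G \<in> biregular_graphs n m d1 d2. F \<subseteq> G}"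
    let ?L = "n * d1 - (e + 2 * d1 * d2)"
    let ?D = "(d2 - card (left_nbrs F y)) * (d1 - card (right_nbrs F x))"
    have x: "x \<in> {1..n}" and y: "y \<in> {1..m}" and xy: "(x, y) \<notin> F"
      using insert p by auto
    have "?S (insert p F) * ?L \<le> ?S (insert p F) * (n * d1 - (card F + 2 * d1 * d2))"
      using insert by (intro mult_le_mono2) auto
    also have "\<dots> \<le> ?S F * ?D"
      using switching_count[OF insert(1) x y xy] by (simp add: p)
    finally have step: "?S (insert p F) * ?L \<le> ?S F * ?D" .
    have "?S (insert p F) * ?L ^ card (insert p F) = ?S (insert p F) * ?L * ?L ^ card F"
      using insert by simp
    also have "\<dots> \<le> ?S F * ?D * ?L ^ card F"
      using step by (rule mult_le_mono1)
    also have "\<dots> = ?S F * ?L ^ card F * ?D"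
      by simp
    also have "\<dots> \<le> card (biregular_graphs n m d1 d2) * degree_weight n m d1 d2 F * ?D"
      using insert by (intro mult_le_mono1) auto
    also have "\<dots> = card (biregular_graphs n m d1 d2) * degree_weight n m d1 d2 (insert p F)"
      using degree_weight_insert[OF insert(1) x y xy] by (simp add: p)
    finally show ?case .
  qed
qed

lemma falling_fact_le_sqrt_power:
  assumes "t \<noteq> 1"
  shows "real (falling_fact d t) \<le> sqrt (real d * (real d - 1)) ^ t"
proof (cases "t = 0 \<or> d = 0")
  case True
  then show ?thesis using assms by (cases t) (auto simp: falling_fact_def)
next
  case False
  define s where "s = sqrt (real d * (real d - 1))"
  have "1 \<le> real d" using False by simp
  then have s_sq: "s\<^sup>2 = real d * (real d - 1)" and "0 \<le> s"
    by (simp_all add: s_def)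
  have "real d - 1 \<le> s"
    unfolding s_def using \<open>1 \<le> real d\<close>
    by (intro real_le_rsqrt) (auto simp: power2_eq_square intro: mult_right_mono)
  have "real (falling_fact d t) \<le> s ^ t" if "2 \<le> t" for t
    using that
  proof (induction t rule: nat_induct_at_least)
    case base
    then show ?case
      using s_sq \<open>1 \<le> real d\<close> by (simp add: falling_fact_def numeral_2_eq_2 of_nat_diff)
  next
    case (Suc t)
    have "real (d - t) \<le> s"
      using Suc.hyps \<open>real d - 1 \<le> s\<close> \<open>0 \<le> s\<close>
      by (cases "t \<le> d") (auto simp: of_nat_diff)
    then have "real (falling_fact d t) * real (d - t) \<le> s ^ t * s"
      using Suc.IH \<open>0 \<le> s\<close> by (intro mult_mono) auto
    then show ?case by (simp add: falling_fact_Suc mult.commute)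
  qed
  then show ?thesis using False assms s_def by simp
qed

lemma prod_falling_fact_le:
  assumes "finite I" "\<And>i. i \<in> I \<Longrightarrow> c i \<noteq> 1"
  shows "real (\<Prod>i\<in>I. falling_fact d (c i)) \<le> sqrt (real d * (real d - 1)) ^ (\<Sum>i\<in>I. c i)"
proof -
  have "real (\<Prod>i\<in>I. falling_fact d (c i)) \<le> (\<Prod>i\<in>I. sqrt (real d * (real d - 1)) ^ c i)"
    unfolding of_nat_prod using assms(2) by (intro prod_mono) (simp add: falling_fact_le_sqrt_power)
  then show ?thesis by (simp add: power_sum)
qed

lemma min_deg2_subgraph_degree_ne_1:
  assumes "min_deg2_subgraph n m H"
  shows "card (right_nbrs H i) \<noteq> 1" and "card (left_nbrs H j) \<noteq> 1"
proof -
  have deg: "2 \<le> card (right_nbrs H i) \<and> 2 \<le> card (left_nbrs H j)" if "(i, j) \<in> H" for i j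
    using assms that unfolding min_deg2_subgraph_def by blast
  show "card (right_nbrs H i) \<noteq> 1"
  proof
    assume one: "card (right_nbrs H i) = 1"
    then obtain j where "right_nbrs H i = {j}" by (rule card_1_singletonE)
    then have "(i, j) \<in> H" by auto
    then show False using deg one by fastforce
  qed
  show "card (left_nbrs H j) \<noteq> 1"
  proof
    assume one: "card (left_nbrs H j) = 1"
    then obtain i where "left_nbrs H j = {i}" by (rule card_1_singletonE)
    then have "(i, j) \<in> H" by auto
    then show False using deg one by fastforce
  qed
qed

lemma degree_weight_le:
  assumes H: "min_deg2_subgraph n m H"
  shows "real (degree_weight n m d1 d2 H)
    \<le> (sqrt (real d1 * (real d1 - 1)) * sqrt (real d2 * (real d2 - 1))) ^ card H"
proof -
  have sub: "H \<subseteq> {1..n} \<times> {1..m}" using H by (simp add: min_deg2_subgraph_def)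
  have "real (\<Prod>i\<in>{1..n}. falling_fact d1 (card (right_nbrs H i)))
      \<le> sqrt (real d1 * (real d1 - 1)) ^ card H"
    using prod_falling_fact_le[of "{1..n}" "\<lambda>i. card (right_nbrs H i)" d1]
      min_deg2_subgraph_degree_ne_1[OF H] card_eq_sum_card_right_nbrs[OF sub] by simp
  moreover have "real (\<Prod>j\<in>{1..m}. falling_fact d2 (card (left_nbrs H j)))
      \<le> sqrt (real d2 * (real d2 - 1)) ^ card H"
    using prod_falling_fact_le[of "{1..m}" "\<lambda>j. card (left_nbrs H j)" d2]
      min_deg2_subgraph_degree_ne_1[OF H] card_eq_sum_card_left_nbrs[OF sub] by simp
  moreover have "0 \<le> real d * (real d - 1)" for d :: nat by (cases d) auto
  ultimately show ?thesis
    unfolding degree_weight_def of_nat_mult power_mult_distrib by (intro mult_mono) (auto intro: prod_nonneg)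
qed

abbreviation edge_ratio :: "nat \<Rightarrow> nat \<Rightarrow> nat \<Rightarrow> nat \<Rightarrow> real" where
  "edge_ratio n m d1 d2 \<equiv> (real d1 - 1) * (real d2 - 1) / (real n * real m)"

lemma edge_ratio_nonneg:
  assumes "n * d1 = m * d2" "d2 \<le> d1"
  shows "0 \<le> edge_ratio n m d1 d2"
proof (cases "d2 = 0 \<or> n * m = 0")
  case True
  with assms show ?thesis by auto
next
  case False
  with assms show ?thesis by (auto intro!: divide_nonneg_nonneg mult_nonneg_nonneg)
qed

lemma prob_random_biregular:
  assumes "biregular_graphs n m d1 d2 \<noteq> {}"
  shows "measure_pmf.prob (random_biregular n m d1 d2) {G. P G} =
    card {G \<in> biregular_graphs n m d1 d2. P G} / card (biregular_graphs n m d1 d2)"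
proof -
  have "biregular_graphs n m d1 d2 \<inter> {G. P G} = {G \<in> biregular_graphs n m d1 d2. P G}" by auto
  then show ?thesis
    unfolding random_biregular_def using measure_pmf_of_set[OF assms finite_biregular_graphs] by simp
qed

lemma prob_contains_le_degree_weight:
  assumes ne: "biregular_graphs n m d1 d2 \<noteq> {}" and H: "H \<subseteq> {1..n} \<times> {1..m}"
    and "card H + 2 * d1 * d2 < n * d1"
  shows "measure_pmf.prob (random_biregular n m d1 d2) {G. H \<subseteq> G}
    \<le> degree_weight n m d1 d2 H / real (n * d1 - (card H + 2 * d1 * d2)) ^ card H"
proof -
  define S where "S = card {G \<in> biregular_graphs n m d1 d2. H \<subseteq> G}"
  define N where "N = card (biregular_graphs n m d1 d2)"
  define L where "L = n * d1 - (card H + 2 * d1 * d2)"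
  have "real (S * L ^ card H) \<le> real (N * degree_weight n m d1 d2 H)"
    using card_supergraphs_mult_le[OF H order_refl] unfolding S_def N_def L_def
    by (simp only: of_nat_le_iff)
  then have "real S * real L ^ card H \<le> real N * real (degree_weight n m d1 d2 H)" by simp
  moreover have "0 < real N" using ne finite_biregular_graphs by (simp add: N_def card_gt_0_iff)
  moreover have "0 < L" using assms(3) by (simp add: L_def)
  then have "0 < real L ^ card H" by simp
  ultimately have "real S / real N \<le> real (degree_weight n m d1 d2 H) / real L ^ card H"
    by (simp add: field_simps)
  then show ?thesis unfolding prob_random_biregular[OF ne] S_def N_def L_def .
qed

lemma sqrt_degree_products_eq:
  assumes eq: "n * d1 = m * d2" and "0 < n" "0 < m"
  shows "sqrt (real d1 * (real d1 - 1)) * sqrt (real d2 * (real d2 - 1)) =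
    sqrt (edge_ratio n m d1 d2) * real (n * d1)"
proof -
  have "real n * real d1 = real m * real d2" using eq by (metis of_nat_mult)
  then have "real (n * d1) ^ 2 = real n * real m * (real d1 * real d2)"
    by (simp add: power2_eq_square)
  then have "real d1 * (real d1 - 1) * (real d2 * (real d2 - 1)) = edge_ratio n m d1 d2 * real (n * d1) ^ 2"
    using assms by simp
  then have "sqrt (real d1 * (real d1 - 1)) * sqrt (real d2 * (real d2 - 1)) =
      sqrt (edge_ratio n m d1 d2 * real (n * d1) ^ 2)"
    by (simp only: real_sqrt_mult[symmetric])
  also have "\<dots> = sqrt (edge_ratio n m d1 d2) * real (n * d1)"
    by (simp only: real_sqrt_mult real_sqrt_abs abs_of_nat)
  finally show ?thesis .
qed

lemma Bernoulli_ratio_le_2: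
  fixes M K :: real
  assumes "0 < M" "0 \<le> K" "2 * real e * K \<le> M"
  shows "(M / (M - K)) ^ e \<le> 2"
proof (cases "e = 0")
  case False
  then have "2 * 1 * K \<le> 2 * real e * K" using assms(2) by (intro mult_mono) auto
  then have "K \<le> M / 2" using assms(3) by simp
  then have "1 - real e * (K / M) \<le> ((M - K) / M) ^ e"
    using Bernoulli_inequality[of "- (K / M)" e] assms(1) by (simp add: diff_divide_distrib)
  moreover have "real e * (K / M) \<le> 1 / 2" using assms by (simp add: field_simps)
  ultimately have "1 / 2 \<le> ((M - K) / M) ^ e" by linarith
  then have "1 / ((M - K) / M) ^ e \<le> 2"
    using \<open>K \<le> M / 2\<close> assms(1) by (simp add: field_simps)
  then show ?thesis by (simp add: power_divide)
qed simp

lemma few_edges_arith: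
  fixes e d1 d2 r :: real
  assumes "0 \<le> e" "24 * e \<le> r" "1 \<le> d1" "0 \<le> d2" "d2 \<le> d1" "d1 \<le> r"
  shows "2 * e * (e + 2 * d1 * d2) \<le> r ^ 3 * d1"
proof -
  have "e * e \<le> e * e * d1" using assms by (simp add: mult_le_cancel_left1)
  moreover have "e * d1 * d2 \<le> e * d1 * r" using assms by (intro mult_left_mono) auto
  ultimately have "2 * e * (e + 2 * d1 * d2) \<le> d1 * (2 * (e * e) + 4 * (e * r))"
    by (simp add: algebra_simps)
  also have "2 * (e * e) + 4 * (e * r) \<le> r * r"
  proof -
    have "576 * (e * e) \<le> r * r" using mult_mono[of "24 * e" r "24 * e" r] assms by simp
    moreover have "24 * (e * r) \<le> r * r" using mult_right_mono[of "24 * e" r r] assms by simp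
    moreover have "0 \<le> r * r" by simp
    ultimately show ?thesis by linarith
  qed
  also have "r * r \<le> r ^ 3"
    using assms by (simp add: power3_eq_cube mult_le_cancel_left1)
  finally show ?thesis using assms by (simp add: mult.commute mult_left_mono)
qed

lemma prob_contains_le_if_few_edges:
  assumes ne: "biregular_graphs n m d1 d2 \<noteq> {}" and eq: "n * d1 = m * d2"
    and H: "min_deg2_subgraph n m H" "H \<noteq> {}"
    and few: "2 * card H * (card H + 2 * d1 * d2) \<le> n * d1"
  shows "measure_pmf.prob (random_biregular n m d1 d2) {G. H \<subseteq> G}
    \<le> 2 * sqrt (edge_ratio n m d1 d2) ^ card H"
proof -
  define e K M where "e = card H" and "K = card H + 2 * d1 * d2" and "M = n * d1"
  have sub: "H \<subseteq> {1..n} \<times> {1..m}" using H(1) by (simp add: min_deg2_subgraph_def)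
  then have "1 \<le> e" using H(2) finite_if_subset_grid[OF sub] by (simp add: e_def Suc_le_eq card_gt_0_iff)
  then have "1 \<le> K" "K \<le> e * K" by (simp_all add: K_def e_def)
  moreover have few': "2 * (e * K) \<le> M" using few by (simp add: e_def K_def M_def mult.assoc)
  ultimately have "K < M" by linarith
  then have "0 < n * d1" "0 < m * d2" using eq unfolding M_def by linarith+
  then have "0 < n" "0 < d1" "0 < m" "0 < d2" by simp_all
  then have ratio: "0 \<le> sqrt (edge_ratio n m d1 d2)" by simp
  have "measure_pmf.prob (random_biregular n m d1 d2) {G. H \<subseteq> G}
      \<le> degree_weight n m d1 d2 H / real (M - K) ^ e"
    using prob_contains_le_degree_weight[OF ne sub] \<open>K < M\<close> by (simp add: e_def K_def M_def)
  also have "\<dots> \<le> (sqrt (edge_ratio n m d1 d2) * real M) ^ e / real (M - K) ^ e"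
    using degree_weight_le[OF H(1), of d1 d2]
    unfolding sqrt_degree_products_eq[OF eq \<open>0 < n\<close> \<open>0 < m\<close>] e_def M_def
    by (intro divide_right_mono) simp_all
  also have "\<dots> = sqrt (edge_ratio n m d1 d2) ^ e * (real M / (real M - real K)) ^ e"
    using \<open>K < M\<close> by (simp add: power_mult_distrib power_divide of_nat_diff)
  also have "\<dots> \<le> sqrt (edge_ratio n m d1 d2) ^ e * 2"
  proof (intro mult_left_mono ratio zero_le_power)
    have "real (2 * (e * K)) \<le> real M" using few' by (simp only: of_nat_le_iff)
    then show "(real M / (real M - real K)) ^ e \<le> 2"
      using \<open>0 < n * d1\<close> by (intro Bernoulli_ratio_le_2) (simp_all add: M_def)
  qed
  finally show ?thesis by (simp add: e_def mult.commute)
qed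

lemma prob_contains_subgraph_le:
  assumes ne: "biregular_graphs n m d1 d2 \<noteq> {}" and eq: "n * d1 = m * d2" and "d2 \<le> d1"
    and d1: "real d1 \<le> real n powr (1/3)" and H: "min_deg2_subgraph n m H"
    and few: "24 * real (card H) \<le> real n powr (1/3)"
  shows "measure_pmf.prob (random_biregular n m d1 d2) {G. H \<subseteq> G}
    \<le> 2 * sqrt (edge_ratio n m d1 d2) ^ card H"
proof -
  consider "H = {}" | "H \<noteq> {}" "d1 = 0" | "H \<noteq> {}" "0 < d1" by blast
  then show ?thesis
  proof cases
    case 1
    then show ?thesis using measure_pmf.prob_le_1 by simp
  next
    case 2
    then have "G = {}" if "G \<in> biregular_graphs n m d1 d2" for G
      using that biregular_zero_degree_empty by (simp add: biregular_graphs_def)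
    then have none: "{G \<in> biregular_graphs n m d1 d2. H \<subseteq> G} = {}"
      using \<open>H \<noteq> {}\<close> by auto
    show ?thesis
      unfolding prob_random_biregular[OF ne] none using edge_ratio_nonneg[OF eq \<open>d2 \<le> d1\<close>] by simp
  next
    case 3
    define r where "r = real n powr (1/3)"
    have "0 < n" using d1 \<open>0 < d1\<close> by (cases "n = 0") auto
    then have "r ^ 3 = real n" by (simp add: r_def powr_power)
    have "2 * real (card H) * (real (card H) + 2 * real d1 * real d2) \<le> r ^ 3 * real d1"
      using few d1 \<open>0 < d1\<close> \<open>d2 \<le> d1\<close> by (intro few_edges_arith) (simp_all add: r_def)
    then have "real (2 * card H * (card H + 2 * d1 * d2)) \<le> real (n * d1)"
      unfolding \<open>r ^ 3 = real n\<close> by simp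
    then show ?thesis
      using prob_contains_le_if_few_edges[OF ne eq H \<open>H \<noteq> {}\<close>] by (simp only: of_nat_le_iff)
  qed
qed

lemma Suc_mod_ne:
  assumes "2 \<le> k" "t < k" shows "Suc t mod k \<noteq> t"
  using assms by (cases "Suc t = k") auto

lemma two_le_card:
  assumes "finite A" "u \<in> A" "v \<in> A" "u \<noteq> v"
  shows "2 \<le> card A"
proof -
  have "card {u, v} \<le> card A" using assms by (intro card_mono) auto
  then show ?thesis using assms(4) by simp
qed

lemma bip_cycle_min_deg2:
  assumes "bip_cycle n m k C"
  shows "min_deg2_subgraph n m C"
proof -
  obtain a b where k: "2 \<le> k" and inj: "inj_on a {..<k}" "inj_on b {..<k}"
    and range: "a ` {..<k} \<subseteq> {1..n}" "b ` {..<k} \<subseteq> {1..m}"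
    and C: "C = (\<lambda>i. (a i, b i)) ` {..<k} \<union> (\<lambda>i. (a (Suc i mod k), b i)) ` {..<k}"
    using assms unfolding bip_cycle_def by blast
  have succ_lt: "Suc t mod k < k" for t using k by simp
  have pred: "Suc ((t + k - 1) mod k) mod k = t" if "t < k" for t
    using that k by (simp add: mod_Suc_eq)
  have sub: "C \<subseteq> {1..n} \<times> {1..m}" using range succ_lt unfolding C by auto
  have fin: "finite C" unfolding C by simp
  have row: "2 \<le> card (right_nbrs C (a t))" if "t < k" for t
  proof (rule two_le_card[OF finite_right_nbrs[OF fin]])
    let ?s = "(t + k - 1) mod k"
    have "?s < k" using k by simp
    then have "?s \<noteq> t" using Suc_mod_ne[OF k] pred[OF that] by auto
    show "b t \<in> right_nbrs C (a t)" using that unfolding C by auto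
    show "b ?s \<in> right_nbrs C (a t)" using pred[OF that] \<open>?s < k\<close> unfolding C by force
    show "b t \<noteq> b ?s" using inj(2) that \<open>?s < k\<close> \<open>?s \<noteq> t\<close> by (auto dest: inj_onD)
  qed
  have col: "2 \<le> card (left_nbrs C (b t))" if "t < k" for t
  proof (rule two_le_card[OF finite_left_nbrs[OF fin]])
    show "a t \<in> left_nbrs C (b t)" using that unfolding C by auto
    show "a (Suc t mod k) \<in> left_nbrs C (b t)" using that unfolding C by auto
    show "a t \<noteq> a (Suc t mod k)"
      using inj(1) that succ_lt Suc_mod_ne[OF k that] by (metis inj_onD lessThan_iff)
  qed
  have "2 \<le> card (right_nbrs C i) \<and> 2 \<le> card (left_nbrs C j)" if "(i, j) \<in> C" for i j
    using that row col succ_lt unfolding C by auto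
  then show ?thesis using sub unfolding min_deg2_subgraph_def by auto
qed

lemma card_bip_cycle:
  assumes "bip_cycle n m k C"
  shows "card C = 2 * k"
proof -
  obtain a b where k: "2 \<le> k" and inj: "inj_on a {..<k}" "inj_on b {..<k}"
    and C: "C = (\<lambda>i. (a i, b i)) ` {..<k} \<union> (\<lambda>i. (a (Suc i mod k), b i)) ` {..<k}"
    using assms unfolding bip_cycle_def by blast
  have "Suc t mod k < k" for t using k by simp
  then have "a t \<noteq> a (Suc t mod k)" if "t < k" for t
    using inj(1) that Suc_mod_ne[OF k that] by (metis inj_onD lessThan_iff)
  then have disj: "(\<lambda>i. (a i, b i)) ` {..<k} \<inter> (\<lambda>i. (a (Suc i mod k), b i)) ` {..<k} = {}"
    using inj(2) by (auto dest: inj_onD)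
  have "inj_on (\<lambda>i. (a i, b i)) {..<k}" "inj_on (\<lambda>i. (a (Suc i mod k), b i)) {..<k}"
    using inj(2) by (auto simp: inj_on_def)
  then show ?thesis unfolding C using disj by (simp add: card_Un_disjoint card_image)
qed

lemma min_deg2_subgraph_Un:
  assumes "min_deg2_subgraph n m A" "min_deg2_subgraph n m B"
  shows "min_deg2_subgraph n m (A \<union> B)"
proof -
  have sub: "A \<union> B \<subseteq> {1..n} \<times> {1..m}" using assms by (auto simp: min_deg2_subgraph_def)
  have fin: "finite (A \<union> B)" using sub by (rule finite_if_subset_grid)
  have "2 \<le> card (right_nbrs (A \<union> B) i) \<and> 2 \<le> card (left_nbrs (A \<union> B) j)"
    if "(i, j) \<in> A \<union> B" for i j
  proof -
    obtain X where X: "X = A \<or> X = B" "(i, j) \<in> X" using \<open>(i, j) \<in> A \<union> B\<close> by blast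
    then have "2 \<le> card (right_nbrs X i) \<and> 2 \<le> card (left_nbrs X j)"
      using assms unfolding min_deg2_subgraph_def by blast
    moreover have "card (right_nbrs X i) \<le> card (right_nbrs (A \<union> B) i)"
      "card (left_nbrs X j) \<le> card (left_nbrs (A \<union> B) j)"
      using X(1) finite_right_nbrs[OF fin] finite_left_nbrs[OF fin] by (auto intro!: card_mono)
    ultimately show ?thesis by linarith
  qed
  then show ?thesis using sub unfolding min_deg2_subgraph_def by blast
qed

lemma prob_contains_cycle_le:
  assumes ne: "biregular_graphs n m d1 d2 \<noteq> {}" and eq: "n * d1 = m * d2" and "d2 \<le> d1"
    and d1: "real d1 \<le> real n powr (1/3)"
    and \<alpha>: "bip_cycle n m k \<alpha>" and short: "48 * real k \<le> real n powr (1/3)"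
  shows "measure_pmf.prob (random_biregular n m d1 d2) {G. \<alpha> \<subseteq> G} \<le> 2 * edge_ratio n m d1 d2 ^ k"
proof -
  have "measure_pmf.prob (random_biregular n m d1 d2) {G. \<alpha> \<subseteq> G}
      \<le> 2 * sqrt (edge_ratio n m d1 d2) ^ card \<alpha>"
    using prob_contains_subgraph_le[OF ne eq \<open>d2 \<le> d1\<close> d1 bip_cycle_min_deg2[OF \<alpha>]] short
    by (simp add: card_bip_cycle[OF \<alpha>])
  also have "sqrt (edge_ratio n m d1 d2) ^ card \<alpha> = edge_ratio n m d1 d2 ^ k"
    using edge_ratio_nonneg[OF eq \<open>d2 \<le> d1\<close>] by (simp add: card_bip_cycle[OF \<alpha>] power_mult)
  finally show ?thesis .
qed

lemma prob_contains_cycle_union_le: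
  assumes ne: "biregular_graphs n m d1 d2 \<noteq> {}" and eq: "n * d1 = m * d2" and "d2 \<le> d1"
    and d1: "real d1 \<le> real n powr (1/3)"
    and \<alpha>: "bip_cycle n m k \<alpha>" and \<beta>: "bip_cycle n m j \<beta>"
    and short: "48 * real (j + k) \<le> real n powr (1/3)"
  shows "measure_pmf.prob (random_biregular n m d1 d2) {G. \<alpha> \<union> \<beta> \<subseteq> G}
    \<le> 2 * sqrt (edge_ratio n m d1 d2) ^ (2 * (j + k) - card (\<alpha> \<inter> \<beta>))"
proof -
  have H: "min_deg2_subgraph n m (\<alpha> \<union> \<beta>)"
    using \<alpha> \<beta> by (intro min_deg2_subgraph_Un bip_cycle_min_deg2)
  then have "finite \<alpha>" "finite \<beta>"
    using finite_if_subset_grid by (auto simp: min_deg2_subgraph_def)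
  then have card: "card (\<alpha> \<union> \<beta>) = 2 * (j + k) - card (\<alpha> \<inter> \<beta>)"
    using card_Un_Int[OF \<open>finite \<alpha>\<close> \<open>finite \<beta>\<close>] card_bip_cycle[OF \<alpha>] card_bip_cycle[OF \<beta>]
    by simp
  have "card (\<alpha> \<union> \<beta>) \<le> 2 * (j + k)"
    using card_Un_le[of \<alpha> \<beta>] card_bip_cycle[OF \<alpha>] card_bip_cycle[OF \<beta>] by simp
  then have "24 * real (card (\<alpha> \<union> \<beta>)) \<le> real n powr (1/3)"
    using short by (simp add: of_nat_le_iff[symmetric, where 'a = real])
  from prob_contains_subgraph_le[OF ne eq \<open>d2 \<le> d1\<close> d1 H this] show ?thesis
    unfolding card .
qed

lemma eventually_powr_1_10_le_powr_1_3:
  "\<forall>\<^sub>F n in sequentially. 96 * real n powr (1/10) \<le> real n powr (1/3)"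
  by real_asymp

theorem lemma2p3:
  "\<exists>c1 > (0::real).
     (\<forall>g :: nat \<Rightarrow> real. g \<in> o(\<lambda>n. real n powr (1/3)) \<longrightarrow>
        (\<forall>\<^sub>F n in sequentially. \<forall>m d1 d2 H.
           biregular_graphs n m d1 d2 \<noteq> {} \<and> n * d1 = m * d2 \<and> d2 \<le> d1 \<and>
           real d1 \<le> real n powr (1/3) \<and>
           min_deg2_subgraph n m H \<and> real (card H) \<le> g n \<longrightarrow>
           measure_pmf.prob (random_biregular n m d1 d2) {G. H \<subseteq> G}
             \<le> c1 * sqrt ((real d1 - 1) * (real d2 - 1) / (real n * real m)) ^ card H)) \<and>
     (\<forall>\<^sub>F n in sequentially. \<forall>m d1 d2 k \<alpha>.
           biregular_graphs n m d1 d2 \<noteq> {} \<and> n * d1 = m * d2 \<and> d2 \<le> d1 \<and>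
           real d1 \<le> real n powr (1/3) \<and>
           bip_cycle n m k \<alpha> \<and> real k \<le> real n powr (1/10) \<longrightarrow>
           measure_pmf.prob (random_biregular n m d1 d2) {G. \<alpha> \<subseteq> G}
             \<le> c1 * ((real d1 - 1) * (real d2 - 1) / (real n * real m)) ^ k) \<and>
     (\<forall>\<^sub>F n in sequentially. \<forall>m d1 d2 k j \<alpha> \<beta>.
           biregular_graphs n m d1 d2 \<noteq> {} \<and> n * d1 = m * d2 \<and> d2 \<le> d1 \<and>
           real d1 \<le> real n powr (1/3) \<and>
           bip_cycle n m k \<alpha> \<and> real k \<le> real n powr (1/10) \<and>
           bip_cycle n m j \<beta> \<and> real j \<le> real n powr (1/10) \<longrightarrow>
           measure_pmf.prob (random_biregular n m d1 d2) {G. \<alpha> \<union> \<beta> \<subseteq> G}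
             \<le> c1 * sqrt ((real d1 - 1) * (real d2 - 1) / (real n * real m))
                    ^ (2 * (j + k) - card (\<alpha> \<inter> \<beta>)))"
proof (intro exI[of _ "2::real"] conjI allI impI, goal_cases)
  case (2 g)
  then have "\<forall>\<^sub>F n in sequentially. norm (g n) \<le> 1/24 * norm (real n powr (1/3))"
    by (intro landau_o.smallD) simp_all
  then have "\<forall>\<^sub>F n in sequentially. 24 * g n \<le> real n powr (1/3)"
    by eventually_elim (simp add: abs_le_iff)
  then show ?case by eventually_elim (auto intro!: prob_contains_subgraph_le)
next
  case 3
  show ?case
    using eventually_powr_1_10_le_powr_1_3 by eventually_elim (auto intro!: prob_contains_cycle_le)
next
  case 4
  show ?case
    using eventually_powr_1_10_le_powr_1_3
    by eventually_elim (intro allI impI, elim conjE, rule prob_contains_cycle_union_le, auto)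
qed simp

end
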